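(* Let $Q$ be a QNP and let $P'=T_D(Q)$ be its direct translation. If $\pi$ solves $Q$ and $\bar\tau=\bar s_0,\bar s_1,\dots$ is an infinite $\pi$-trajectory of $P'$, then there is a variable $X$ and a recurrent state $\bar s$ of $\bar\tau$ such that $\pi(\bar s)$ is a $Dec(X)$ action and $X$ is in $stack(\bar s')$ for every recurrent state $\bar s'$ of $\bar\tau$.
   Context: QNPs: $Q=\langle F,V,I,O,G\rangle$ with propositional variables $F$, numerical variables $V$ (non-negative reals), literals $p,\neg p$, $X=0$, $X>0$; actions with precondition $Pre(a)$, propositional effects, numerical effects $N(a)\subseteq\{Inc(X),Dec(X)\}$ (at most one per variable; $Dec(X)\in N(a)$ implies $X>0\in Pre(a)$). A state assigns truth values to $F$ and reals $\ge0$ to $V$; initial states satisfy $I$ (closed world); goal states satisfy $G$; for applicable $a$, successors apply propositional effects, strictly increase $X$ for $Inc(X)$, strictly decrease $X$ for $Dec(X)$, rest unchanged. For $\epsilon>0$ an $\epsilon$-trajectory is such a sequence from an initial state where each change of a variable has magnitude $\ge\epsilon$ unless it goes from a value $<\epsilon$ to $0$. The boolean state $\bar s$ is the truth valuation on atoms $p$ and $X=0$; a policy maps states to actions depending only on the boolean state; a maximal $\pi$-trajectory is infinite without goal, ends at its first goal state, or ends where $\pi$ is undefined/inapplicable; $\pi$ solves $Q$ iff for all $\epsilon>0$ all maximal $\epsilon$-$\pi$-trajectories reach a goal state. $T_D(Q)$ is the FOND problem over $F\cup\{p_{X=0}\}$ reading $X=0$/$X>0$ as $p_{X=0}$/$\neg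 p_{X=0}$, replacing $Inc(X)$ by the deterministic effect $\neg p_{X=0}$ and $Dec(X)$ by the nondeterministic effect $\neg p_{X=0}\mid p_{X=0}$; its states are boolean states and $\pi$ acts via $\bar s\mapsto\pi(s)$. A $\pi$-trajectory of it starts at its initial state, applies $\pi$ and follows possible successors; recurrent states are those occurring infinitely often. $Dec(X)$/$Inc(X)$ actions are those coming from actions with $Dec(X)$/$Inc(X)$ in $N(a)$. The policy graph $\mathcal G$ has as nodes the states of $T_D(Q)$ reachable under $\pi$ and edges $(\bar s,\bar s')$ for $\bar s'$ a possible successor of $\bar s$ under $\pi(\bar s)$. Fix a run of the following (modified) Sieve procedure on $\mathcal G$: repeatedly compute the strongly connected components (SCCs) of the current graph, choose an SCC $C$ and a variable $X$ such that $\pi(\bar s)$ is a $Dec(X)$ action for some $\bar s\in C$, $\pi(\bar s)$ is an $Inc(X)$ action for no $\bar s\in C$, and $X$ was not chosen in an earlier iteration for a component containing the states of $C$; remove all edges $(\bar s,\bar s')$ with $\bar s,\bar s'\in C$ and $\pi(\bar s)$ a $Dec(X)$ action; stop when no such choice exists (the run is not stopped merely because the graph became acyclic). For a state $\bar s$, $stack(\bar s)$ is the sequence, in order of iterations, of the variables $X$ chosen in those iterations whose chosen component $C$ contains $\bar s$. *)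

theory Defs
  imports Complex_Main
begin

text \<open>Propositional variables F are the (finite) type 'p, numerical variables V the
(finite) type 'v.  A boolean atom is either a propositional variable p (Inl p) or
the atom "X = 0" (Inr X).  A literal is an atom with a polarity; (Inr X, False)
is the literal X > 0.\<close>

datatype numeff = Inc | Dec

type_synonym ('p, 'v) batom = "'p + 'v"
type_synonym ('p, 'v) lit = "('p, 'v) batom \<times> bool"
type_synonym ('p, 'v) bstate = "('p, 'v) batom \<Rightarrow> bool"
type_synonym ('p, 'v) qstate = "('p \<Rightarrow> bool) \<times> ('v \<Rightarrow> real)"

record ('p, 'v, 'a) qnp =
  acts :: "'a set"
  pre  :: "'a \<Rightarrow> ('p, 'v) lit set"
  eff  :: "'a \<Rightarrow> ('p \<times> bool) set"
  neff :: "'a \<Rightarrow> 'v \<Rightarrow> numeff option"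
  init :: "('p, 'v) lit set"
  goal :: "('p, 'v) lit set"

definition wf_qnp :: "('p, 'v, 'a) qnp \<Rightarrow> bool" where
  "wf_qnp Q \<longleftrightarrow> finite (acts Q)
     \<and> (\<forall>a\<in>acts Q. \<forall>X. neff Q a X = Some Dec \<longrightarrow> (Inr X, False) \<in> pre Q a)
     \<and> (\<forall>a\<in>acts Q. \<forall>p. \<not> ((p, True) \<in> eff Q a \<and> (p, False) \<in> eff Q a))
     \<and> (\<forall>atm. \<not> ((atm, True) \<in> init Q \<and> (atm, False) \<in> init Q))"

definition is_policy :: "('p, 'v, 'a) qnp \<Rightarrow> (('p, 'v) bstate \<Rightarrow> 'a option) \<Rightarrow> bool" where
  "is_policy Q \<pi> \<longleftrightarrow> (\<forall>bs a. \<pi> bs = Some a \<longrightarrow> a \<in> acts Q)"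

definition bholds :: "('p, 'v) lit \<Rightarrow> ('p, 'v) bstate \<Rightarrow> bool" where
  "bholds l bs \<longleftrightarrow> bs (fst l) = snd l"

definition bstate_of :: "('p, 'v) qstate \<Rightarrow> ('p, 'v) bstate" where
  "bstate_of s atm = (case atm of Inl p \<Rightarrow> fst s p | Inr X \<Rightarrow> snd s X = 0)"

definition holds :: "('p, 'v) lit \<Rightarrow> ('p, 'v) qstate \<Rightarrow> bool" where
  "holds l s \<longleftrightarrow> bholds l (bstate_of s)"

definition valid_state :: "('p, 'v) qstate \<Rightarrow> bool" where
  "valid_state s \<longleftrightarrow> (\<forall>X. snd s X \<ge> 0)"

definition prop_update :: "('p \<times> bool) set \<Rightarrow> bool \<Rightarrow> 'p \<Rightarrow> bool" where
  "prop_update E old p = (if (p, True) \<in> E then True else if (p, False) \<in> E then False else old)"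

definition qinit :: "('p, 'v, 'a) qnp \<Rightarrow> ('p, 'v) qstate \<Rightarrow> bool" where
  "qinit Q s \<longleftrightarrow> valid_state s \<and> (\<forall>l\<in>init Q. holds l s)
      \<and> (\<forall>atm. (atm, True) \<notin> init Q \<longrightarrow> \<not> bstate_of s atm)"

definition qgoal :: "('p, 'v, 'a) qnp \<Rightarrow> ('p, 'v) qstate \<Rightarrow> bool" where
  "qgoal Q s \<longleftrightarrow> (\<forall>l\<in>goal Q. holds l s)"

definition qapplicable :: "('p, 'v, 'a) qnp \<Rightarrow> 'a \<Rightarrow> ('p, 'v) qstate \<Rightarrow> bool" where
  "qapplicable Q a s \<longleftrightarrow> (\<forall>l\<in>pre Q a. holds l s)"

definition qsucc :: "('p, 'v, 'a) qnp \<Rightarrow> 'a \<Rightarrow> ('p, 'v) qstate \<Rightarrow> ('p, 'v) qstate \<Rightarrow> bool" where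
  "qsucc Q a s s' \<longleftrightarrow> valid_state s \<and> valid_state s' \<and> qapplicable Q a s
     \<and> (\<forall>p. fst s' p = prop_update (eff Q a) (fst s p) p)
     \<and> (\<forall>X. (case neff Q a X of
               Some Inc \<Rightarrow> snd s' X > snd s X
             | Some Dec \<Rightarrow> snd s' X < snd s X
             | None \<Rightarrow> snd s' X = snd s X))"

definition eps_ok :: "real \<Rightarrow> ('p, 'v) qstate \<Rightarrow> ('p, 'v) qstate \<Rightarrow> bool" where
  "eps_ok \<epsilon> s s' \<longleftrightarrow> (\<forall>X. snd s' X \<noteq> snd s X \<longrightarrow>
       (\<bar>snd s' X - snd s X\<bar> \<ge> \<epsilon> \<or> (snd s X < \<epsilon> \<and> snd s' X = 0)))"

definition qpstep :: "('p, 'v, 'a) qnp \<Rightarrow> (('p, 'v) bstate \<Rightarrow> 'a option) \<Rightarrow> real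
                      \<Rightarrow> ('p, 'v) qstate \<Rightarrow> ('p, 'v) qstate \<Rightarrow> bool" where
  "qpstep Q \<pi> \<epsilon> s s' \<longleftrightarrow> (\<exists>a. \<pi> (bstate_of s) = Some a \<and> qsucc Q a s s' \<and> eps_ok \<epsilon> s s')"

text \<open>pi solves Q: for every eps > 0, every maximal eps-pi-trajectory reaches a goal state.
 Maximal trajectories are (i) infinite ones (these must contain a goal state, at which the
 maximal trajectory is cut), (ii) finite ones ending in their first goal state (fine), or
 (iii) finite goal-free ones ending where pi is undefined or inapplicable (forbidden).\<close>

definition solves :: "('p, 'v, 'a) qnp \<Rightarrow> (('p, 'v) bstate \<Rightarrow> 'a option) \<Rightarrow> bool" where
  "solves Q \<pi> \<longleftrightarrow> (\<forall>\<epsilon>>0.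
     (\<forall>f. qinit Q (f 0) \<and> (\<forall>i. qpstep Q \<pi> \<epsilon> (f i) (f (Suc i))) \<longrightarrow> (\<exists>i. qgoal Q (f i)))
   \<and> (\<forall>ss. ss \<noteq> [] \<and> qinit Q (hd ss)
          \<and> (\<forall>i. Suc i < length ss \<longrightarrow> qpstep Q \<pi> \<epsilon> (ss ! i) (ss ! Suc i))
          \<and> (\<forall>s\<in>set ss. \<not> qgoal Q s)
          \<and> (case \<pi> (bstate_of (last ss)) of None \<Rightarrow> True | Some a \<Rightarrow> \<not> qapplicable Q a (last ss))
          \<longrightarrow> False))"

definition td_init :: "('p, 'v, 'a) qnp \<Rightarrow> ('p, 'v) bstate" where
  "td_init Q atm = ((atm, True) \<in> init Q)"

definition td_goal :: "('p, 'v, 'a) qnp \<Rightarrow> ('p, 'v) bstate \<Rightarrow> bool" where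
  "td_goal Q bs \<longleftrightarrow> (\<forall>l\<in>goal Q. bholds l bs)"

definition td_succ :: "('p, 'v, 'a) qnp \<Rightarrow> 'a \<Rightarrow> ('p, 'v) bstate \<Rightarrow> ('p, 'v) bstate \<Rightarrow> bool" where
  "td_succ Q a bs bs' \<longleftrightarrow> (\<forall>l\<in>pre Q a. bholds l bs)
     \<and> (\<forall>p. bs' (Inl p) = prop_update (eff Q a) (bs (Inl p)) p)
     \<and> (\<forall>X. (case neff Q a X of
               Some Inc \<Rightarrow> bs' (Inr X) = False
             | Some Dec \<Rightarrow> True
             | None \<Rightarrow> bs' (Inr X) = bs (Inr X)))"

definition td_step :: "('p, 'v, 'a) qnp \<Rightarrow> (('p, 'v) bstate \<Rightarrow> 'a option)
                       \<Rightarrow> ('p, 'v) bstate \<Rightarrow> ('p, 'v) bstate \<Rightarrow> bool" where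
  "td_step Q \<pi> bs bs' \<longleftrightarrow> \<not> td_goal Q bs \<and> (\<exists>a. \<pi> bs = Some a \<and> td_succ Q a bs bs')"

definition td_inf_traj :: "('p, 'v, 'a) qnp \<Rightarrow> (('p, 'v) bstate \<Rightarrow> 'a option)
                           \<Rightarrow> (nat \<Rightarrow> ('p, 'v) bstate) \<Rightarrow> bool" where
  "td_inf_traj Q \<pi> \<tau> \<longleftrightarrow> \<tau> 0 = td_init Q \<and> (\<forall>i. td_step Q \<pi> (\<tau> i) (\<tau> (Suc i)))"

definition recurrent :: "(nat \<Rightarrow> 'b) \<Rightarrow> 'b set" where
  "recurrent \<tau> = {s. infinite {i. \<tau> i = s}}"

definition dec_at :: "('p, 'v, 'a) qnp \<Rightarrow> (('p, 'v) bstate \<Rightarrow> 'a option) \<Rightarrow> 'v \<Rightarrow> ('p, 'v) bstate \<Rightarrow> bool" where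
  "dec_at Q \<pi> X bs \<longleftrightarrow> (\<exists>a. \<pi> bs = Some a \<and> neff Q a X = Some Dec)"

definition inc_at :: "('p, 'v, 'a) qnp \<Rightarrow> (('p, 'v) bstate \<Rightarrow> 'a option) \<Rightarrow> 'v \<Rightarrow> ('p, 'v) bstate \<Rightarrow> bool" where
  "inc_at Q \<pi> X bs \<longleftrightarrow> (\<exists>a. \<pi> bs = Some a \<and> neff Q a X = Some Inc)"

definition pg_nodes :: "('p, 'v, 'a) qnp \<Rightarrow> (('p, 'v) bstate \<Rightarrow> 'a option) \<Rightarrow> ('p, 'v) bstate set" where
  "pg_nodes Q \<pi> = {bs. (td_init Q, bs) \<in> {(x, y). td_step Q \<pi> x y}\<^sup>*}"

definition pg_edges :: "('p, 'v, 'a) qnp \<Rightarrow> (('p, 'v) bstate \<Rightarrow> 'a option) \<Rightarrow> ('p, 'v) bstate rel" where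
  "pg_edges Q \<pi> = {(x, y). x \<in> pg_nodes Q \<pi> \<and> td_step Q \<pi> x y}"

definition is_scc :: "'b set \<Rightarrow> 'b rel \<Rightarrow> 'b set \<Rightarrow> bool" where
  "is_scc N E C \<longleftrightarrow> (\<exists>s\<in>N. C = {t\<in>N. (s, t) \<in> E\<^sup>* \<and> (t, s) \<in> E\<^sup>*})"

definition remove_edges :: "('p, 'v, 'a) qnp \<Rightarrow> (('p, 'v) bstate \<Rightarrow> 'a option)
     \<Rightarrow> ('p, 'v) bstate rel \<Rightarrow> ('p, 'v) bstate set \<times> 'v \<Rightarrow> ('p, 'v) bstate rel" where
  "remove_edges Q \<pi> E CX = E - {(s, t). s \<in> fst CX \<and> t \<in> fst CX \<and> dec_at Q \<pi> (snd CX) s}"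

definition sieve_graph :: "('p, 'v, 'a) qnp \<Rightarrow> (('p, 'v) bstate \<Rightarrow> 'a option)
     \<Rightarrow> (('p, 'v) bstate set \<times> 'v) list \<Rightarrow> ('p, 'v) bstate rel" where
  "sieve_graph Q \<pi> prev = foldl (remove_edges Q \<pi>) (pg_edges Q \<pi>) prev"

definition sieve_choice_ok :: "('p, 'v, 'a) qnp \<Rightarrow> (('p, 'v) bstate \<Rightarrow> 'a option)
     \<Rightarrow> (('p, 'v) bstate set \<times> 'v) list \<Rightarrow> ('p, 'v) bstate set \<times> 'v \<Rightarrow> bool" where
  "sieve_choice_ok Q \<pi> prev CX \<longleftrightarrow>
     is_scc (pg_nodes Q \<pi>) (sieve_graph Q \<pi> prev) (fst CX)
   \<and> (\<exists>s\<in>fst CX. dec_at Q \<pi> (snd CX) s)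
   \<and> (\<forall>s\<in>fst CX. \<not> inc_at Q \<pi> (snd CX) s)
   \<and> (\<forall>CX'\<in>set prev. snd CX' = snd CX \<longrightarrow> \<not> fst CX \<subseteq> fst CX')"

definition sieve_run :: "('p, 'v, 'a) qnp \<Rightarrow> (('p, 'v) bstate \<Rightarrow> 'a option)
     \<Rightarrow> (('p, 'v) bstate set \<times> 'v) list \<Rightarrow> bool" where
  "sieve_run Q \<pi> run \<longleftrightarrow> (\<forall>i<length run. sieve_choice_ok Q \<pi> (take i run) (run ! i))
     \<and> (\<forall>CX. \<not> sieve_choice_ok Q \<pi> run CX)"

definition stack :: "(('p, 'v) bstate set \<times> 'v) list \<Rightarrow> ('p, 'v) bstate \<Rightarrow> 'v list" where
  "stack run bs = map snd (filter (\<lambda>CX. bs \<in> fst CX) run)"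

end

theory Submission
  imports Defs "HOL-Library.Infinite_Set"
begin

text \<open>If \<pi> solves Q, the graph left by a complete run of the Sieve is acyclic. Take the
  strongly connected component C of a cycle. If every variable decremented somewhere in C is
  also incremented somewhere in C, then a trajectory of T_D(Q) that reaches C and then loops
  through all of C forever can be realised by integer counters as a goal-free trajectory of Q,
  which contradicts that \<pi> solves Q. So some X is decremented but never incremented in C. Then
  (C, X) is another admissible Sieve choice, because the X-decrementing edges inside C are
  still present.

  Beyond some point, \<tau> only visits recurrent states. The edges taken after that point make the
  recurrent states strongly connected, so the Sieve must remove one of these edges. The first
  iteration that does so chooses a component that still contains every recurrent state, and
  the removed edge starts at a recurrent state where \<pi> decrements the chosen variable.\<close>

section \<open>Walks and lassos\<close>

text \<open>The vertex list of a walk omits its final vertex, so walks compose by appending.\<close>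

definition walk :: "'b rel \<Rightarrow> 'b \<Rightarrow> 'b list \<Rightarrow> 'b \<Rightarrow> bool" where
  "walk E x ps y \<longleftrightarrow> hd (ps @ [y]) = x \<and> successively (\<lambda>a b. (a, b) \<in> E) (ps @ [y])"

lemma walk_Nil [simp]: "walk E x [] y \<longleftrightarrow> x = y"
  by (auto simp: walk_def)

lemma walk_Cons [simp]:
  "walk E x (v # ps) y \<longleftrightarrow> v = x \<and> (x, hd (ps @ [y])) \<in> E \<and> walk E (hd (ps @ [y])) ps y"
  by (auto simp: walk_def successively_Cons)

lemma walk_append: "walk E x ps y \<Longrightarrow> walk E y qs z \<Longrightarrow> walk E x (ps @ qs) z"
  by (cases "ps = []") (auto simp: walk_def successively_append_iff)

lemma walk_mono:
  assumes "walk E x ps y" and "E \<subseteq> E'"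
  shows "walk E' x ps y"
proof -
  have "successively (\<lambda>a b. (a, b) \<in> E) (ps @ [y])"
    using assms(1) by (simp add: walk_def)
  then have "successively (\<lambda>a b. (a, b) \<in> E') (ps @ [y])"
    by (rule successively_mono) (use assms(2) in blast)
  then show ?thesis using assms(1) by (simp add: walk_def)
qed

lemma rtrancl_imp_walk: "(x, y) \<in> E\<^sup>* \<Longrightarrow> \<exists>ps. walk E x ps y"
proof (induction rule: converse_rtrancl_induct)
  case base
  have "walk E y [] y" by simp
  then show ?case ..
next
  case (step x z)
  then obtain ps where "walk E z ps y" by blast
  with step.hyps(1) have "walk E x (x # ps) y" by (simp add: walk_def successively_Cons)
  then show ?case ..
qed

lemma trancl_imp_walk:
  assumes "(x, y) \<in> E\<^sup>+"
  shows "\<exists>ps. walk E x (x # ps) y"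
proof -
  obtain z where edge: "(x, z) \<in> E" and path: "(z, y) \<in> E\<^sup>*"
    using tranclD[OF assms] by blast
  obtain ps where "walk E z ps y"
    using rtrancl_imp_walk[OF path] by blast
  with edge have "walk E x (x # ps) y"
    by (simp add: walk_def successively_Cons)
  then show ?thesis ..
qed

lemma walk_imp_rtrancl: "walk E x ps y \<Longrightarrow> (x, y) \<in> E\<^sup>*"
proof (induction ps arbitrary: x)
  case (Cons v ps)
  from Cons.prems have "(x, hd (ps @ [y])) \<in> E" and "walk E (hd (ps @ [y])) ps y" by simp_all
  with Cons.IH have "(x, hd (ps @ [y])) \<in> E" "(hd (ps @ [y]), y) \<in> E\<^sup>*" by blast+
  then show ?case by (rule converse_rtrancl_into_rtrancl)
qed simp

lemma walk_reaches: "walk E x ps y \<Longrightarrow> v \<in> set ps \<Longrightarrow> (x, v) \<in> E\<^sup>* \<and> (v, y) \<in> E\<^sup>+"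
proof (induction ps arbitrary: x)
  case (Cons w ps)
  from Cons.prems(1) have "w = x" and edge: "(x, hd (ps @ [y])) \<in> E"
    and tail: "walk E (hd (ps @ [y])) ps y"
    by simp_all
  show ?case
  proof (cases "v = x")
    case True
    then show ?thesis using rtrancl_into_trancl2[OF edge walk_imp_rtrancl[OF tail]] by simp
  next
    case False
    then have "v \<in> set ps" using Cons.prems \<open>w = x\<close> by simp
    then show ?thesis using Cons.IH[OF tail] converse_rtrancl_into_rtrancl[OF edge] by blast
  qed
qed simp

lemma walk_nth:
  "walk E x ps y \<Longrightarrow> i < length ps \<Longrightarrow> ((ps @ [y]) ! i, (ps @ [y]) ! Suc i) \<in> E"
  unfolding walk_def by (auto dest: successively_nth)

lemma closed_walk_covering:
  assumes "(r, r) \<in> E\<^sup>+" and "finite S" and "\<forall>c\<in>S. (r, c) \<in> E\<^sup>* \<and> (c, r) \<in> E\<^sup>*"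
  shows "\<exists>cs. cs \<noteq> [] \<and> walk E r cs r \<and> S \<subseteq> set cs"
  using assms(2,3)
proof (induction S rule: finite_induct)
  case empty
  then show ?case using trancl_imp_walk[OF assms(1)] by blast
next
  case (insert c S)
  then obtain cs where cs: "cs \<noteq> []" "walk E r cs r" "S \<subseteq> set cs" by auto
  have to_c: "(r, c) \<in> E\<^sup>*" and from_c: "(c, r) \<in> E\<^sup>+"
    using insert.prems rtrancl_trancl_trancl[OF _ assms(1), of c] by simp_all
  obtain ps where ps: "walk E r ps c"
    using rtrancl_imp_walk[OF to_c] by blast
  obtain qs where qs: "walk E c (c # qs) r"
    using trancl_imp_walk[OF from_c] by blast
  have "walk E r (cs @ ps @ c # qs) r"
    using walk_append[OF cs(2) walk_append[OF ps qs]] .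
  then show ?case using cs(3) by (intro exI[of _ "cs @ ps @ c # qs"]) auto
qed

definition lasso :: "'b list \<Rightarrow> 'b list \<Rightarrow> nat \<Rightarrow> 'b" where
  "lasso ps cs i = (if i < length ps then ps ! i else cs ! ((i - length ps) mod length cs))"

lemma lasso_0: "walk E x ps r \<Longrightarrow> walk E r cs r \<Longrightarrow> cs \<noteq> [] \<Longrightarrow> lasso ps cs 0 = x"
  by (cases ps; cases cs) (auto simp: lasso_def)

lemma lasso_step:
  assumes ps: "walk E x ps r" and cs: "walk E r cs r" "cs \<noteq> []"
  shows "(lasso ps cs i, lasso ps cs (Suc i)) \<in> E"
proof -
  have cs_hd: "cs ! 0 = r" using cs by (cases cs) auto
  consider "Suc i < length ps" | "Suc i = length ps" | "length ps \<le> i" by linarith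
  then show ?thesis
  proof cases
    case 1
    then show ?thesis using walk_nth[OF ps, of i] by (simp add: lasso_def nth_append)
  next
    case 2
    then show ?thesis using walk_nth[OF ps, of i] cs_hd by (simp add: lasso_def nth_append)
  next
    case 3
    define n where "n = (i - length ps) mod length cs"
    have n: "n < length cs" using cs(2) by (simp add: n_def)
    have "lasso ps cs (Suc i) = (cs @ [r]) ! Suc n"
    proof (cases "Suc n < length cs")
      case True
      then have "(Suc i - length ps) mod length cs = Suc n"
        using 3 by (simp add: n_def mod_Suc Suc_diff_le)
      then show ?thesis using 3 True by (simp add: lasso_def nth_append)
    next
      case False
      then have "Suc n = length cs" using n by simp
      then have "(Suc i - length ps) mod length cs = 0"
        using 3 by (simp add: n_def mod_Suc Suc_diff_le)
      then show ?thesis using 3 cs_hd \<open>Suc n = length cs\<close> by (simp add: lasso_def nth_append)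
    qed
    moreover have "lasso ps cs i = (cs @ [r]) ! n" using 3 n by (simp add: lasso_def n_def nth_append)
    ultimately show ?thesis using walk_nth[OF cs(1) n] by simp
  qed
qed

lemma lasso_in_cycle: "cs \<noteq> [] \<Longrightarrow> length ps \<le> i \<Longrightarrow> lasso ps cs i \<in> set cs"
  by (simp add: lasso_def)

lemma lasso_visits:
  assumes "c \<in> set cs"
  shows "\<exists>j. i \<le> j \<and> j < i + length ps + length cs \<and> lasso ps cs j = c"
proof -
  obtain n where n: "n < length cs" "cs ! n = c" using assms by (auto simp: in_set_conv_nth)
  define L where "L = length cs"
  have L: "0 < L" using n L_def by linarith
  define t where "t = i + (n + L - i mod L) mod L"
  have "t mod L = (i + (n + L - i mod L)) mod L"
    by (simp add: t_def mod_add_right_eq)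
  also have "\<dots> = (i mod L + (n + L - i mod L)) mod L"
    by (simp add: mod_add_left_eq)
  also have "i mod L + (n + L - i mod L) = n + L"
    using mod_less_divisor[OF L, of i] by linarith
  finally have "t mod L = n" using n by (simp add: L_def)
  moreover have "i \<le> t" "t < i + L" using L by (auto simp: t_def)
  ultimately have "lasso ps cs (t + length ps) = c" using n by (simp add: lasso_def L_def)
  then show ?thesis using \<open>t < i + L\<close> \<open>i \<le> t\<close> by (intro exI[of _ "t + length ps"]) (simp add: L_def)
qed

section \<open>Realising trajectories of the direct translation\<close>

lemma td_inf_traj_succ:
  "td_inf_traj Q \<pi> \<sigma> \<Longrightarrow> \<exists>a. \<pi> (\<sigma> i) = Some a \<and> td_succ Q a (\<sigma> i) (\<sigma> (Suc i))"
  by (auto simp: td_inf_traj_def td_step_def)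

lemma td_succ_Inr:
  "td_succ Q a bs bs' \<Longrightarrow> (case neff Q a X of
      Some Inc \<Rightarrow> bs' (Inr X) = False | Some Dec \<Rightarrow> True | None \<Rightarrow> bs' (Inr X) = bs (Inr X))"
  unfolding td_succ_def by blast

lemma td_inf_traj_inc:
  assumes "td_inf_traj Q \<pi> \<sigma>" "inc_at Q \<pi> X (\<sigma> i)"
  shows "\<not> \<sigma> (Suc i) (Inr X)"
proof -
  obtain a where "neff Q a X = Some Inc" "td_succ Q a (\<sigma> i) (\<sigma> (Suc i))"
    using assms td_inf_traj_succ[OF assms(1), of i] by (auto simp: inc_at_def)
  then show ?thesis using td_succ_Inr[of Q a _ _ X] by simp
qed

lemma td_inf_traj_dec:
  assumes wf: "wf_qnp Q" and pol: "is_policy Q \<pi>" and traj: "td_inf_traj Q \<pi> \<sigma>"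
    and dec: "dec_at Q \<pi> X (\<sigma> i)"
  shows "\<not> \<sigma> i (Inr X)"
proof -
  obtain a where a: "\<pi> (\<sigma> i) = Some a" "neff Q a X = Some Dec"
    using dec by (auto simp: dec_at_def)
  then have "(Inr X, False) \<in> pre Q a"
    using wf pol by (auto simp: wf_qnp_def is_policy_def)
  moreover have "td_succ Q a (\<sigma> i) (\<sigma> (Suc i))"
    using td_inf_traj_succ[OF traj, of i] a by auto
  ultimately show ?thesis unfolding td_succ_def bholds_def by fastforce
qed

lemma td_inf_traj_other:
  assumes "td_inf_traj Q \<pi> \<sigma>" "\<not> inc_at Q \<pi> X (\<sigma> i)" "\<not> dec_at Q \<pi> X (\<sigma> i)"
  shows "\<sigma> (Suc i) (Inr X) = \<sigma> i (Inr X)"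
proof -
  obtain a where a: "\<pi> (\<sigma> i) = Some a" and succ: "td_succ Q a (\<sigma> i) (\<sigma> (Suc i))"
    using td_inf_traj_succ[OF assms(1)] by blast
  have "neff Q a X \<noteq> Some Inc" "neff Q a X \<noteq> Some Dec"
    using assms(2,3) a by (auto simp: inc_at_def dec_at_def)
  then have "neff Q a X = None"
  proof (cases "neff Q a X")
    case (Some e)
    with \<open>neff Q a X \<noteq> Some Inc\<close> \<open>neff Q a X \<noteq> Some Dec\<close> show ?thesis by (cases e) simp_all
  qed
  then show ?thesis using td_succ_Inr[OF succ, of X] by simp
qed

lemma dec_at_not_inc_at: "dec_at Q \<pi> X s \<Longrightarrow> \<not> inc_at Q \<pi> X s"
  by (auto simp: dec_at_def inc_at_def)

lemma td_init_holds_init: "wf_qnp Q \<Longrightarrow> l \<in> init Q \<Longrightarrow> bholds l (td_init Q)"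
  by (cases l; cases "snd l") (auto simp: wf_qnp_def bholds_def td_init_def)

text \<open>Reading the counters as the values of the numerical variables yields a goal-free
  1-trajectory of Q.\<close>

lemma not_solves_if_counters:
  fixes v :: "'v \<Rightarrow> nat \<Rightarrow> nat"
  assumes wf: "wf_qnp Q" and traj: "td_inf_traj Q \<pi> \<sigma>"
    and zero: "\<And>X i. v X i = 0 \<longleftrightarrow> \<sigma> i (Inr X)"
    and inc: "\<And>X i. inc_at Q \<pi> X (\<sigma> i) \<Longrightarrow> v X i < v X (Suc i)"
    and dec: "\<And>X i. dec_at Q \<pi> X (\<sigma> i) \<Longrightarrow> v X (Suc i) < v X i"
    and other: "\<And>X i. \<not> inc_at Q \<pi> X (\<sigma> i) \<Longrightarrow> \<not> dec_at Q \<pi> X (\<sigma> i)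
      \<Longrightarrow> v X (Suc i) = v X i"
  shows "\<not> solves Q \<pi>"
proof
  assume sol: "solves Q \<pi>"
  define f where "f i = ((\<lambda>p. \<sigma> i (Inl p)), (\<lambda>X. real (v X i)))" for i
  have bstate: "bstate_of (f i) = \<sigma> i" for i
    by (rule ext) (auto simp: bstate_of_def f_def zero split: sum.split)
  have valid: "valid_state (f i)" for i
    by (simp add: valid_state_def f_def)
  have "qinit Q (f 0)"
    using td_init_holds_init[OF wf] traj valid
    by (simp add: qinit_def holds_def bstate td_inf_traj_def td_init_def)
  moreover have "qpstep Q \<pi> 1 (f i) (f (Suc i))" for i
  proof -
    obtain a where a: "\<pi> (\<sigma> i) = Some a" and succ: "td_succ Q a (\<sigma> i) (\<sigma> (Suc i))"
      using td_inf_traj_succ[OF traj] by blast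
    have numeric: "case neff Q a X of
              Some Inc \<Rightarrow> snd (f (Suc i)) X > snd (f i) X
            | Some Dec \<Rightarrow> snd (f (Suc i)) X < snd (f i) X
            | None \<Rightarrow> snd (f (Suc i)) X = snd (f i) X" for X
    proof (cases "neff Q a X")
      case None
      then show ?thesis using other[of X i] a by (simp add: f_def inc_at_def dec_at_def)
    next
      case (Some e)
      then show ?thesis
        using inc[of X i] dec[of X i] a by (cases e) (simp_all add: f_def inc_at_def dec_at_def)
    qed
    moreover have "qapplicable Q a (f i)"
      using succ by (simp add: qapplicable_def holds_def bstate td_succ_def)
    moreover have "fst (f (Suc i)) p = prop_update (eff Q a) (fst (f i) p) p" for p
      using succ by (simp add: f_def td_succ_def)
    ultimately have "qsucc Q a (f i) (f (Suc i))"
      using valid by (simp add: qsucc_def)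
    moreover have "eps_ok 1 (f i) (f (Suc i))"
      by (auto simp: eps_ok_def f_def)
    ultimately show ?thesis using a by (auto simp: qpstep_def bstate)
  qed
  moreover note conjunct1[OF sol[unfolded solves_def, rule_format, OF zero_less_one]]
  ultimately obtain i where "qgoal Q (f i)" by blast
  then have "td_goal Q (\<sigma> i)" by (simp add: qgoal_def td_goal_def holds_def bstate)
  with traj show False by (simp add: td_inf_traj_def td_step_def)
qed

definition bounded_dec_runs ::
  "('p, 'v, 'a) qnp \<Rightarrow> (('p, 'v) bstate \<Rightarrow> 'a option) \<Rightarrow> (nat \<Rightarrow> ('p, 'v) bstate) \<Rightarrow> nat \<Rightarrow> bool"
where
  "bounded_dec_runs Q \<pi> \<sigma> M \<longleftrightarrow> (\<forall>X i k. i + M \<le> k \<longrightarrow> dec_at Q \<pi> X (\<sigma> k)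
      \<longrightarrow> (\<exists>j\<in>{i..<k}. inc_at Q \<pi> X (\<sigma> j)))"

definition pending_decs ::
  "('p, 'v, 'a) qnp \<Rightarrow> (('p, 'v) bstate \<Rightarrow> 'a option) \<Rightarrow> (nat \<Rightarrow> ('p, 'v) bstate) \<Rightarrow> 'v \<Rightarrow> nat
    \<Rightarrow> nat set"
where
  "pending_decs Q \<pi> \<sigma> X i =
     {k. i \<le> k \<and> dec_at Q \<pi> X (\<sigma> k) \<and> (\<forall>j\<in>{i..<k}. \<not> inc_at Q \<pi> X (\<sigma> j))}"

lemma pending_decs_subset:
  assumes "bounded_dec_runs Q \<pi> \<sigma> M"
  shows "pending_decs Q \<pi> \<sigma> X i \<subseteq> {i..<i + M}"
proof
  fix k assume "k \<in> pending_decs Q \<pi> \<sigma> X i"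
  then have "i \<le> k" "dec_at Q \<pi> X (\<sigma> k)" "\<forall>j\<in>{i..<k}. \<not> inc_at Q \<pi> X (\<sigma> j)"
    by (simp_all add: pending_decs_def)
  show "k \<in> {i..<i + M}"
  proof (rule ccontr)
    assume "k \<notin> {i..<i + M}"
    with \<open>i \<le> k\<close> have "i + M \<le> k" by simp
    with assms \<open>dec_at Q \<pi> X (\<sigma> k)\<close> obtain j where "j \<in> {i..<k}" "inc_at Q \<pi> X (\<sigma> j)"
      unfolding bounded_dec_runs_def by blast
    with \<open>\<forall>j\<in>{i..<k}. \<not> inc_at Q \<pi> X (\<sigma> j)\<close> show False by blast
  qed
qed

lemma pending_decs_Suc:
  assumes "\<not> inc_at Q \<pi> X (\<sigma> i)"
  shows "pending_decs Q \<pi> \<sigma> X i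
    = {k. k = i \<and> dec_at Q \<pi> X (\<sigma> i)} \<union> pending_decs Q \<pi> \<sigma> X (Suc i)"
proof (intro set_eqI)
  fix k
  show "k \<in> pending_decs Q \<pi> \<sigma> X i
    \<longleftrightarrow> k \<in> {k. k = i \<and> dec_at Q \<pi> X (\<sigma> i)} \<union> pending_decs Q \<pi> \<sigma> X (Suc i)"
  proof (cases "i < k")
    case True
    then have "{i..<k} = insert i {Suc i..<k}" by auto
    then show ?thesis using True assms by (simp add: pending_decs_def Suc_le_eq)
  next
    case False
    then show ?thesis by (auto simp: pending_decs_def)
  qed
qed

lemma card_pending_decs_le:
  "bounded_dec_runs Q \<pi> \<sigma> M \<Longrightarrow> card (pending_decs Q \<pi> \<sigma> X i) \<le> M"
  using card_mono[OF finite_atLeastLessThan pending_decs_subset] by fastforce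

text \<open>Each increment adds B, which exceeds the number of decrements that can follow before
  the next increment, so the counter stays positive while X is.\<close>

primrec dec_counter ::
  "('p, 'v, 'a) qnp \<Rightarrow> (('p, 'v) bstate \<Rightarrow> 'a option) \<Rightarrow> (nat \<Rightarrow> ('p, 'v) bstate) \<Rightarrow> nat \<Rightarrow> 'v
    \<Rightarrow> nat \<Rightarrow> nat"
where
  "dec_counter Q \<pi> \<sigma> B X 0 = (if \<sigma> 0 (Inr X) then 0 else B)"
| "dec_counter Q \<pi> \<sigma> B X (Suc i) =
     (if \<sigma> (Suc i) (Inr X) then 0
      else if inc_at Q \<pi> X (\<sigma> i) then dec_counter Q \<pi> \<sigma> B X i + B
      else if dec_at Q \<pi> X (\<sigma> i) then dec_counter Q \<pi> \<sigma> B X i - 1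
      else dec_counter Q \<pi> \<sigma> B X i)"

lemma dec_counter_exceeds_pending:
  assumes wf: "wf_qnp Q" and pol: "is_policy Q \<pi>" and traj: "td_inf_traj Q \<pi> \<sigma>"
    and bounded: "bounded_dec_runs Q \<pi> \<sigma> M" and "M < B"
  shows "\<not> \<sigma> i (Inr X) \<Longrightarrow> card (pending_decs Q \<pi> \<sigma> X i) < dec_counter Q \<pi> \<sigma> B X i"
proof (induction i)
  case 0
  then show ?case using card_pending_decs_le[OF bounded, of X 0] \<open>M < B\<close> by simp
next
  case (Suc i)
  let ?P = "pending_decs Q \<pi> \<sigma> X" and ?c = "dec_counter Q \<pi> \<sigma> B X"
  consider (inc) "inc_at Q \<pi> X (\<sigma> i)" | (dec) "dec_at Q \<pi> X (\<sigma> i)"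
    | (other) "\<not> inc_at Q \<pi> X (\<sigma> i)" "\<not> dec_at Q \<pi> X (\<sigma> i)"
    by blast
  then show ?case
  proof cases
    case inc
    then show ?thesis
      using Suc.prems card_pending_decs_le[OF bounded, of X "Suc i"] \<open>M < B\<close> by simp
  next
    case dec
    have "\<not> \<sigma> i (Inr X)" using td_inf_traj_dec[OF wf pol traj dec] .
    then have "card (?P i) < ?c i" by (rule Suc.IH)
    moreover have "?P i = insert i (?P (Suc i))"
      using pending_decs_Suc[where \<sigma> = \<sigma> and i = i, OF dec_at_not_inc_at[OF dec]] dec by simp
    moreover have "i \<notin> ?P (Suc i)" by (simp add: pending_decs_def)
    moreover have "finite (?P (Suc i))"
      using pending_decs_subset[OF bounded] by (rule finite_subset) simp
    ultimately have "card (?P (Suc i)) < ?c i - 1" by simp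
    then show ?thesis using Suc.prems dec dec_at_not_inc_at[OF dec] by simp
  next
    case other
    have "?P i = ?P (Suc i)"
      using pending_decs_Suc[where \<sigma> = \<sigma> and i = i, OF other(1)] other(2) by simp
    moreover have "\<sigma> (Suc i) (Inr X) = \<sigma> i (Inr X)" using td_inf_traj_other[OF traj other] .
    ultimately show ?thesis using Suc other by simp
  qed
qed

lemma not_solves_if_bounded_dec_runs:
  assumes wf: "wf_qnp Q" and pol: "is_policy Q \<pi>" and traj: "td_inf_traj Q \<pi> \<sigma>"
    and bounded: "bounded_dec_runs Q \<pi> \<sigma> M"
  shows "\<not> solves Q \<pi>"
proof -
  define v where "v = dec_counter Q \<pi> \<sigma> (Suc M)"
  have pos: "0 < v X i" if "\<not> \<sigma> i (Inr X)" for X i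
    using dec_counter_exceeds_pending[OF wf pol traj bounded lessI that] unfolding v_def by linarith
  have zero: "v X i = 0 \<longleftrightarrow> \<sigma> i (Inr X)" for X i
    using pos[of i X] by (cases i) (auto simp: v_def)
  have inc: "v X i < v X (Suc i)" if "inc_at Q \<pi> X (\<sigma> i)" for X i
    using td_inf_traj_inc[OF traj that] that by (simp add: v_def)
  have dec: "v X (Suc i) < v X i" if "dec_at Q \<pi> X (\<sigma> i)" for X i
    using pos[OF td_inf_traj_dec[OF wf pol traj that]] that dec_at_not_inc_at[OF that]
    by (simp add: v_def)
  have other: "v X (Suc i) = v X i"
    if "\<not> inc_at Q \<pi> X (\<sigma> i)" "\<not> dec_at Q \<pi> X (\<sigma> i)" for X i
    using td_inf_traj_other[OF traj that] zero[of X i] that by (simp add: v_def)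
  show ?thesis using not_solves_if_counters[where v = v, OF wf traj zero inc dec other] .
qed

section \<open>The Sieve and recurrent states\<close>

definition removed_edges ::
  "('p, 'v, 'a) qnp \<Rightarrow> (('p, 'v) bstate \<Rightarrow> 'a option) \<Rightarrow> (('p, 'v) bstate set \<times> 'v) list
    \<Rightarrow> ('p, 'v) bstate rel"
where
  "removed_edges Q \<pi> run =
     {(s, t). \<exists>CX\<in>set run. s \<in> fst CX \<and> t \<in> fst CX \<and> dec_at Q \<pi> (snd CX) s}"

lemma foldl_remove_edges:
  "foldl (remove_edges Q \<pi>) E run = E - removed_edges Q \<pi> run"
  by (induction run arbitrary: E) (auto simp: remove_edges_def removed_edges_def)

lemma sieve_graph_eq: "sieve_graph Q \<pi> run = pg_edges Q \<pi> - removed_edges Q \<pi> run"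
  by (simp add: sieve_graph_def foldl_remove_edges)

lemma sieve_first_removal:
  assumes "E \<subseteq> pg_edges Q \<pi>" and "\<not> E \<subseteq> sieve_graph Q \<pi> run"
  obtains k s t where "k < length run" and "E \<subseteq> sieve_graph Q \<pi> (take k run)"
    and "(s, t) \<in> E" and "s \<in> fst (run ! k)" and "t \<in> fst (run ! k)"
    and "dec_at Q \<pi> (snd (run ! k)) s"
proof -
  define removes where "removes j \<longleftrightarrow> j < length run \<and> (\<exists>s t. (s, t) \<in> E
    \<and> s \<in> fst (run ! j) \<and> t \<in> fst (run ! j) \<and> dec_at Q \<pi> (snd (run ! j)) s)" for j
  obtain s t where "(s, t) \<in> E" and "(s, t) \<in> removed_edges Q \<pi> run"
    using assms by (auto simp: sieve_graph_eq)
  then obtain CX where "CX \<in> set run"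
    and CX: "s \<in> fst CX" "t \<in> fst CX" "dec_at Q \<pi> (snd CX) s"
    by (auto simp: removed_edges_def)
  then obtain j where "j < length run" "run ! j = CX" by (auto simp: in_set_conv_nth)
  with \<open>(s, t) \<in> E\<close> CX have "removes j" unfolding removes_def by blast
  then have "\<exists>k. removes k \<and> (\<forall>j<k. \<not> removes j)"
    using exists_least_iff[of removes] by blast
  then obtain k where k: "removes k" and first: "\<And>j. j < k \<Longrightarrow> \<not> removes j"
    by blast
  have "(s, t) \<notin> removed_edges Q \<pi> (take k run)" if "(s, t) \<in> E" for s t
  proof
    assume "(s, t) \<in> removed_edges Q \<pi> (take k run)"
    then obtain j where "j < k" "j < length run" "s \<in> fst (run ! j)" "t \<in> fst (run ! j)"
      "dec_at Q \<pi> (snd (run ! j)) s"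
      by (auto simp: removed_edges_def in_set_conv_nth)
    with that first[of j] show False by (auto simp: removes_def)
  qed
  then have "E \<subseteq> sieve_graph Q \<pi> (take k run)"
    using assms(1) by (auto simp: sieve_graph_eq)
  with k that show ?thesis by (auto simp: removes_def)
qed

lemma eventually_recurrent:
  fixes \<tau> :: "nat \<Rightarrow> 'b::finite"
  obtains N where "\<And>i. N \<le> i \<Longrightarrow> \<tau> i \<in> recurrent \<tau>"
proof -
  have "{i. \<tau> i \<notin> recurrent \<tau>} = (\<Union>s\<in>- recurrent \<tau>. {i. \<tau> i = s})" by auto
  then have "finite {i. \<tau> i \<notin> recurrent \<tau>}" by (simp add: recurrent_def)
  then obtain N where "\<And>i. \<tau> i \<notin> recurrent \<tau> \<Longrightarrow> i < N"
    by (auto simp: finite_nat_set_iff_bounded)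
  with that show ?thesis by (meson not_less)
qed

lemma recurrent_occurs_after: "s \<in> recurrent \<tau> \<Longrightarrow> \<exists>i\<ge>n. \<tau> i = s"
  by (simp add: recurrent_def infinite_nat_iff_unbounded_le)

definition tail_edges :: "(nat \<Rightarrow> 'b) \<Rightarrow> nat \<Rightarrow> 'b rel" where
  "tail_edges \<tau> N = {(\<tau> i, \<tau> (Suc i)) | i. N \<le> i}"

lemma tail_edges_path:
  assumes "N \<le> i" and "i \<le> j"
  shows "(\<tau> i, \<tau> j) \<in> (tail_edges \<tau> N)\<^sup>*"
  using assms(2)
proof (induction j rule: dec_induct)
  case (step j)
  with assms(1) have "(\<tau> j, \<tau> (Suc j)) \<in> tail_edges \<tau> N" by (auto simp: tail_edges_def)
  with step.IH show ?case by (rule rtrancl_into_rtrancl)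
qed simp

lemma recurrent_connected:
  assumes "s \<in> recurrent \<tau>" and "t \<in> recurrent \<tau>"
  shows "(s, t) \<in> (tail_edges \<tau> N)\<^sup>*"
proof -
  obtain i where "N \<le> i" "\<tau> i = s" using recurrent_occurs_after[OF assms(1)] by blast
  moreover obtain j where "i \<le> j" "\<tau> j = t" using recurrent_occurs_after[OF assms(2)] by blast
  ultimately show ?thesis using tail_edges_path[of N i j \<tau>] by simp
qed

lemma recurrent_cycle:
  assumes "\<tau> N \<in> recurrent \<tau>"
  shows "(\<tau> N, \<tau> N) \<in> (tail_edges \<tau> N)\<^sup>+"
proof -
  obtain j where "Suc N \<le> j" "\<tau> j = \<tau> N" using recurrent_occurs_after[OF assms] by blast
  moreover have "(\<tau> N, \<tau> (Suc N)) \<in> tail_edges \<tau> N" by (auto simp: tail_edges_def)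
  moreover have "(\<tau> (Suc N), \<tau> j) \<in> (tail_edges \<tau> N)\<^sup>*"
    using tail_edges_path[of N "Suc N" j \<tau>] \<open>Suc N \<le> j\<close> by simp
  ultimately show ?thesis using rtrancl_into_trancl2[of "\<tau> N" "\<tau> (Suc N)"] by simp
qed

lemma pg_nodes_step: "x \<in> pg_nodes Q \<pi> \<Longrightarrow> td_step Q \<pi> x y \<Longrightarrow> y \<in> pg_nodes Q \<pi>"
  unfolding pg_nodes_def using rtrancl_into_rtrancl[of _ x "{(x, y). td_step Q \<pi> x y}" y] by simp

lemma pg_nodes_rtrancl_closed:
  "(x, y) \<in> (pg_edges Q \<pi>)\<^sup>* \<Longrightarrow> x \<in> pg_nodes Q \<pi> \<Longrightarrow> y \<in> pg_nodes Q \<pi>"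
proof (induction rule: rtrancl_induct)
  case (step y z)
  then show ?case using pg_nodes_step[of y Q \<pi> z] by (simp add: pg_edges_def)
qed

lemma td_inf_traj_pg_nodes: "td_inf_traj Q \<pi> \<tau> \<Longrightarrow> \<tau> i \<in> pg_nodes Q \<pi>"
proof (induction i)
  case 0
  then show ?case by (simp add: td_inf_traj_def pg_nodes_def)
next
  case (Suc i)
  then show ?case using pg_nodes_step[of "\<tau> i" Q \<pi> "\<tau> (Suc i)"] by (simp add: td_inf_traj_def)
qed

lemma td_inf_traj_tail_edges: "td_inf_traj Q \<pi> \<tau> \<Longrightarrow> tail_edges \<tau> N \<subseteq> pg_edges Q \<pi>"
  by (auto simp: tail_edges_def pg_edges_def td_inf_traj_pg_nodes td_inf_traj_def)

lemma recurrent_subset_pg_nodes: "td_inf_traj Q \<pi> \<tau> \<Longrightarrow> recurrent \<tau> \<subseteq> pg_nodes Q \<pi>"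
proof
  fix x assume traj: "td_inf_traj Q \<pi> \<tau>" and "x \<in> recurrent \<tau>"
  then obtain i where "\<tau> i = x" using recurrent_occurs_after[of x \<tau> 0] by blast
  then show "x \<in> pg_nodes Q \<pi>" using td_inf_traj_pg_nodes[OF traj] by blast
qed

lemma in_stack: "CX \<in> set run \<Longrightarrow> s \<in> fst CX \<Longrightarrow> snd CX \<in> set (stack run s)"
  by (auto simp: stack_def)

lemma is_scc_contains_connected:
  assumes "is_scc N E C" and "S \<subseteq> N" and "s \<in> S" and "s \<in> C"
    and "\<And>x y. x \<in> S \<Longrightarrow> y \<in> S \<Longrightarrow> (x, y) \<in> E\<^sup>*"
  shows "S \<subseteq> C"
proof
  fix x assume "x \<in> S"
  obtain c where C: "C = {t \<in> N. (c, t) \<in> E\<^sup>* \<and> (t, c) \<in> E\<^sup>*}"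
    using assms(1) by (auto simp: is_scc_def)
  with assms(4) have "(c, s) \<in> E\<^sup>*" "(s, c) \<in> E\<^sup>*" by auto
  moreover have "(s, x) \<in> E\<^sup>*" "(x, s) \<in> E\<^sup>*" using assms(3,5) \<open>x \<in> S\<close> by blast+
  ultimately have "(c, x) \<in> E\<^sup>*" "(x, c) \<in> E\<^sup>*" by (meson rtrancl_trans)+
  then show "x \<in> C" using C assms(2) \<open>x \<in> S\<close> by auto
qed

text \<open>Otherwise a lasso reaching r and then looping through all of C forever is a goal-free
  trajectory of T_D(Q) in which every decrement is followed by an increment of the same
  variable within a bounded number of steps.\<close>

lemma cycle_has_unmatched_dec:
  fixes Q :: "('p::finite, 'v::finite, 'a) qnp"
  assumes wf: "wf_qnp Q" and pol: "is_policy Q \<pi>" and sol: "solves Q \<pi>"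
    and G: "G \<subseteq> pg_edges Q \<pi>" and r: "r \<in> pg_nodes Q \<pi>" and cycle: "(r, r) \<in> G\<^sup>+"
  defines "C \<equiv> {t. (r, t) \<in> G\<^sup>* \<and> (t, r) \<in> G\<^sup>*}"
  shows "\<exists>X. (\<exists>s\<in>C. dec_at Q \<pi> X s) \<and> (\<forall>s\<in>C. \<not> inc_at Q \<pi> X s)"
proof (rule ccontr)
  assume "\<not> ?thesis"
  then have matched: "\<And>X s. s \<in> C \<Longrightarrow> dec_at Q \<pi> X s \<Longrightarrow> \<exists>c\<in>C. inc_at Q \<pi> X c" by blast
  let ?T = "{(x, y). td_step Q \<pi> x y}"
  have G_T: "G \<subseteq> ?T" using G by (auto simp: pg_edges_def)
  have "(td_init Q, r) \<in> ?T\<^sup>*" using r by (simp add: pg_nodes_def)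
  from rtrancl_imp_walk[OF this] obtain ps where ps: "walk ?T (td_init Q) ps r" ..
  have "\<forall>c\<in>C. (r, c) \<in> G\<^sup>* \<and> (c, r) \<in> G\<^sup>*" by (simp add: C_def)
  from closed_walk_covering[OF cycle finite this]
  obtain cs where cs: "cs \<noteq> []" "walk G r cs r" "C \<subseteq> set cs" by blast
  have cs_C: "set cs \<subseteq> C"
  proof
    fix x assume "x \<in> set cs"
    from walk_reaches[OF cs(2) this] show "x \<in> C" by (simp add: C_def trancl_into_rtrancl)
  qed
  define \<sigma> where "\<sigma> = lasso ps cs"
  have cs_T: "walk ?T r cs r" using walk_mono[OF cs(2) G_T] .
  have traj: "td_inf_traj Q \<pi> \<sigma>"
    using lasso_0[OF ps cs_T cs(1)] lasso_step[OF ps cs_T cs(1)]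
    by (simp add: td_inf_traj_def \<sigma>_def)
  have "bounded_dec_runs Q \<pi> \<sigma> (length ps + length cs)"
    unfolding bounded_dec_runs_def
  proof (intro allI impI)
    fix X i k assume k: "i + (length ps + length cs) \<le> k" and "dec_at Q \<pi> X (\<sigma> k)"
    moreover have "\<sigma> k \<in> C" using lasso_in_cycle[OF cs(1), of ps k] k cs_C by (auto simp: \<sigma>_def)
    ultimately obtain c where "c \<in> C" "inc_at Q \<pi> X c" using matched by blast
    moreover obtain j where "i \<le> j" "j < i + length ps + length cs" "\<sigma> j = c"
      using lasso_visits[of c cs i ps] \<open>c \<in> C\<close> cs(3) by (auto simp: \<sigma>_def)
    ultimately show "\<exists>j\<in>{i..<k}. inc_at Q \<pi> X (\<sigma> j)" using k by auto
  qed
  with not_solves_if_bounded_dec_runs[OF wf pol traj] sol show False by blast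
qed

lemma sieve_graph_acyclic:
  fixes Q :: "('p::finite, 'v::finite, 'a) qnp"
  assumes wf: "wf_qnp Q" and pol: "is_policy Q \<pi>" and sol: "solves Q \<pi>"
    and run: "sieve_run Q \<pi> run" and r: "r \<in> pg_nodes Q \<pi>"
  shows "(r, r) \<notin> (sieve_graph Q \<pi> run)\<^sup>+"
proof
  let ?G = "sieve_graph Q \<pi> run"
  define C where "C = {t. (r, t) \<in> ?G\<^sup>* \<and> (t, r) \<in> ?G\<^sup>*}"
  assume cycle: "(r, r) \<in> ?G\<^sup>+"
  have G_pg: "?G \<subseteq> pg_edges Q \<pi>" by (auto simp: sieve_graph_eq)
  obtain X where dec: "\<exists>s\<in>C. dec_at Q \<pi> X s" and no_inc: "\<forall>s\<in>C. \<not> inc_at Q \<pi> X s"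
    using cycle_has_unmatched_dec[OF wf pol sol G_pg r cycle] by (auto simp: C_def)
  have C_eq: "C = {t \<in> pg_nodes Q \<pi>. (r, t) \<in> ?G\<^sup>* \<and> (t, r) \<in> ?G\<^sup>*}"
    using pg_nodes_rtrancl_closed[OF rtrancl_mono[OF G_pg, THEN subsetD] r] by (auto simp: C_def)
  have fresh: "\<not> C \<subseteq> fst CX" if "CX \<in> set run" "snd CX = X" for CX
  proof
    assume sub: "C \<subseteq> fst CX"
    obtain s where s: "s \<in> C" "dec_at Q \<pi> X s" using dec by blast
    then have "(s, r) \<in> ?G\<^sup>+" using rtrancl_trancl_trancl[OF _ cycle, of s] by (simp add: C_def)
    then obtain t where "(s, t) \<in> ?G" "(t, r) \<in> ?G\<^sup>*" using tranclD[of s r ?G] by blast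
    moreover from this have "t \<in> C" using s rtrancl_into_rtrancl[of r s ?G t] by (simp add: C_def)
    ultimately show False
      using s sub that by (auto simp: sieve_graph_eq removed_edges_def)
  qed
  have "is_scc (pg_nodes Q \<pi>) ?G C"
    unfolding is_scc_def C_eq using r by (intro bexI[where x = r]) simp_all
  then have "sieve_choice_ok Q \<pi> run (C, X)"
    using dec no_inc fresh by (simp add: sieve_choice_ok_def)
  with run show False by (simp add: sieve_run_def)
qed

lemma sieve_removes_tail_edge:
  fixes Q :: "('p::finite, 'v::finite, 'a) qnp"
  assumes "wf_qnp Q" and "is_policy Q \<pi>" and "solves Q \<pi>" and "sieve_run Q \<pi> run"
    and traj: "td_inf_traj Q \<pi> \<tau>" and "\<tau> N \<in> recurrent \<tau>"
  shows "\<not> tail_edges \<tau> N \<subseteq> sieve_graph Q \<pi> run"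
proof
  assume "tail_edges \<tau> N \<subseteq> sieve_graph Q \<pi> run"
  then have "(\<tau> N, \<tau> N) \<in> (sieve_graph Q \<pi> run)\<^sup>+"
    using trancl_mono[OF recurrent_cycle[OF assms(6)]] by blast
  with sieve_graph_acyclic[OF assms(1-4) td_inf_traj_pg_nodes[OF traj]] show False by blast
qed

lemma recurrent_subset_sieve_component:
  assumes run: "sieve_run Q \<pi> run" and traj: "td_inf_traj Q \<pi> \<tau>" and k: "k < length run"
    and kept: "tail_edges \<tau> N \<subseteq> sieve_graph Q \<pi> (take k run)"
    and s: "s \<in> recurrent \<tau>" "s \<in> fst (run ! k)"
  shows "recurrent \<tau> \<subseteq> fst (run ! k)"
proof (rule is_scc_contains_connected)
  show "is_scc (pg_nodes Q \<pi>) (sieve_graph Q \<pi> (take k run)) (fst (run ! k))"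
    using run k by (simp add: sieve_run_def sieve_choice_ok_def)
  show "(x, y) \<in> (sieve_graph Q \<pi> (take k run))\<^sup>*" if "x \<in> recurrent \<tau>" "y \<in> recurrent \<tau>" for x y
    using recurrent_connected[OF that] rtrancl_mono[OF kept] by blast
qed (use s recurrent_subset_pg_nodes[OF traj] in simp_all)

theorem theorem14:
  fixes Q :: "('p :: finite, 'v :: finite, 'a) qnp"
    and \<pi> :: "('p, 'v) bstate \<Rightarrow> 'a option"
    and run :: "(('p, 'v) bstate set \<times> 'v) list"
    and \<tau> :: "nat \<Rightarrow> ('p, 'v) bstate"
  assumes "wf_qnp Q"
    and "is_policy Q \<pi>"
    and "solves Q \<pi>"
    and "sieve_run Q \<pi> run"
    and "td_inf_traj Q \<pi> \<tau>"
  shows "\<exists>X s. s \<in> recurrent \<tau> \<and> dec_at Q \<pi> X s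
           \<and> (\<forall>s'\<in>recurrent \<tau>. X \<in> set (stack run s'))"
proof -
  obtain N where rec: "\<And>i. N \<le> i \<Longrightarrow> \<tau> i \<in> recurrent \<tau>"
    using eventually_recurrent[of \<tau>] by blast
  have "\<not> tail_edges \<tau> N \<subseteq> sieve_graph Q \<pi> run"
    using sieve_removes_tail_edge[OF assms rec[OF order_refl]] .
  then obtain k s t where k: "k < length run"
    and kept: "tail_edges \<tau> N \<subseteq> sieve_graph Q \<pi> (take k run)"
    and edge: "(s, t) \<in> tail_edges \<tau> N" and s: "s \<in> fst (run ! k)" and "t \<in> fst (run ! k)"
    and dec: "dec_at Q \<pi> (snd (run ! k)) s"
    by (rule sieve_first_removal[OF td_inf_traj_tail_edges[OF assms(5)]])
  from edge have s_rec: "s \<in> recurrent \<tau>" using rec by (auto simp: tail_edges_def)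
  have "recurrent \<tau> \<subseteq> fst (run ! k)"
    using recurrent_subset_sieve_component[OF assms(4,5) k kept s_rec s] .
  then have "\<forall>s'\<in>recurrent \<tau>. snd (run ! k) \<in> set (stack run s')"
    using in_stack[OF nth_mem[OF k]] by blast
  with dec s_rec show ?thesis by blast
qed

end
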